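(* Let $\mathbb{G}$ be a Carnot group with a strongly homogeneous norm $\|\cdot\|$ and let $K:\mathbb{G}\setminus\{\mathbf0\}\to\mathbb{R}^d$ be continuous. (1) If $K$ is dilation antisymmetric, then $K$ satisfies the annular boundedness condition. (2) If $\|\cdot\|$ is symmetric and $K$ is antisymmetric, then $K$ satisfies the annular boundedness condition.
   Context: $\mathbb{G}$: connected simply connected nilpotent Lie group with stratified Lie algebra $\mathfrak v_1\oplus\cdots\oplus\mathfrak v_s$, identified with $\mathbb{R}^N$ via exponential coordinates; $\delta_t$ acts by $t^i$ on $\mathfrak v_i$ ($t\in\mathbb{R}$). Strongly homogeneous norm: continuous, $\|\delta_tp\|=|t|\|p\|$ for $t\in\mathbb{R}$, $\|p\|=0$ iff $p=\mathbf0$; symmetric means $\|p^{-1}\|=\|p\|$; $B(0,r)=\{\|p\|<r\}$. $K$ is antisymmetric if $K(p^{-1})=-K(p)$, dilation antisymmetric if $K(\delta_{-1}p)=-K(p)$, for all $p\ne\mathbf0$. Let $\pi:\mathbb{G}\to\mathfrak v_1\cong\mathbb{R}^m$ be the projection; a vertical hyperplane is a codimension-1 subgroup $\pi^{-1}(X)$ with $X$ an $(m-1)$-dimensional linear subspace of $\mathbb{R}^m$. $K$ satisfies the annular boundedness condition if (componentwise) for every $\|\cdot\|$-radial $C^\infty$ $\psi:\mathbb{G}\to\mathbb{R}$ with $\chi_{B(0,1/2)}\le\psi\le\chi_{B(0,2)}$ there is $A_\psi\ge1$ with $\left|\int_{\mathbb{W}}(\psi^R-\psi^r)K\,d\mathcal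 L^{N-1}\right|\le A_\psi$ for all $0<r<R<\infty$ and all vertical hyperplanes $\mathbb{W}$, where $\psi^r(p)=\psi(\delta_rp)$ and $\mathcal L^{N-1}$ is Lebesgue measure on $\mathbb{W}$. *)

theory Defs
  imports "HOL-Analysis.Analysis"
begin

text \<open>The Carnot group is modelled in exponential coordinates as real^'n, with a basis
adapted to the stratification: coordinate i lies in layer deg i.\<close>

definition layer :: "('n::finite \<Rightarrow> nat) \<Rightarrow> nat \<Rightarrow> (real^'n) set" where
  "layer deg j = {x. \<forall>i. deg i \<noteq> j \<longrightarrow> x $ i = 0}"

definition dil :: "('n::finite \<Rightarrow> nat) \<Rightarrow> real \<Rightarrow> real^'n \<Rightarrow> real^'n" where
  "dil deg t p = (\<chi> i. t ^ deg i * p $ i)"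

text \<open>Stratified Lie algebra structure (bracket br) with step s, and a group law gmul on
real^'n given in exponential coordinates: lines through 0 are one-parameter subgroups and
the second order term of the product is half the bracket.\<close>

definition carnot_group ::
  "('n::finite \<Rightarrow> nat) \<Rightarrow> (real^'n \<Rightarrow> real^'n \<Rightarrow> real^'n) \<Rightarrow> (real^'n \<Rightarrow> real^'n \<Rightarrow> real^'n) \<Rightarrow> bool" where
  "carnot_group deg br gmul \<longleftrightarrow>
     (\<exists>s::nat. 1 \<le> s \<and> (\<forall>i. 1 \<le> deg i \<and> deg i \<le> s) \<and> (\<forall>j\<in>{1..s}. \<exists>i. deg i = j) \<and>
        (\<forall>j\<in>{1..s}. span {br x y | x y. x \<in> layer deg 1 \<and> y \<in> layer deg j} = layer deg (Suc j))) \<and>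
     bilinear br \<and> (\<forall>x y. br x y = - br y x) \<and>
     (\<forall>x y z. br x (br y z) + br y (br z x) + br z (br x y) = 0) \<and>
     continuous_on UNIV (\<lambda>(x, y). gmul x y) \<and>
     (\<forall>x y z. gmul (gmul x y) z = gmul x (gmul y z)) \<and>
     (\<forall>x. gmul 0 x = x \<and> gmul x 0 = x) \<and>
     (\<forall>x. \<exists>y. gmul x y = 0 \<and> gmul y x = 0) \<and>
     (\<forall>x s t. gmul (s *\<^sub>R x) (t *\<^sub>R x) = (s + t) *\<^sub>R x) \<and>
     (\<forall>x y. ((\<lambda>t. (gmul (t *\<^sub>R x) (t *\<^sub>R y) - t *\<^sub>R (x + y) - (t^2 / 2) *\<^sub>R br x y) /\<^sub>R t^2)
              \<longlongrightarrow> 0) (at 0))"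

definition ginv :: "(real^'n::finite \<Rightarrow> real^'n \<Rightarrow> real^'n) \<Rightarrow> real^'n \<Rightarrow> real^'n" where
  "ginv gmul p = (THE q. gmul p q = 0 \<and> gmul q p = 0)"

definition strongly_homogeneous_norm :: "('n::finite \<Rightarrow> nat) \<Rightarrow> (real^'n \<Rightarrow> real) \<Rightarrow> bool" where
  "strongly_homogeneous_norm deg nrm \<longleftrightarrow> continuous_on UNIV nrm \<and>
     (\<forall>t p. nrm (dil deg t p) = \<bar>t\<bar> * nrm p) \<and> (\<forall>p. nrm p = 0 \<longleftrightarrow> p = 0)"

definition symmetric_norm :: "(real^'n::finite \<Rightarrow> real^'n \<Rightarrow> real^'n) \<Rightarrow> (real^'n \<Rightarrow> real) \<Rightarrow> bool" where
  "symmetric_norm gmul nrm \<longleftrightarrow> (\<forall>p. nrm (ginv gmul p) = nrm p)"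

definition nball :: "(real^'n::finite \<Rightarrow> real) \<Rightarrow> real \<Rightarrow> (real^'n) set" where
  "nball nrm r = {p. nrm p < r}"

definition antisymmetric_kernel ::
  "(real^'n::finite \<Rightarrow> real^'n \<Rightarrow> real^'n) \<Rightarrow> (real^'n \<Rightarrow> real^'d::finite) \<Rightarrow> bool" where
  "antisymmetric_kernel gmul K \<longleftrightarrow> (\<forall>p. p \<noteq> 0 \<longrightarrow> K (ginv gmul p) = - K p)"

definition dilation_antisymmetric ::
  "('n::finite \<Rightarrow> nat) \<Rightarrow> (real^'n \<Rightarrow> real^'d::finite) \<Rightarrow> bool" where
  "dilation_antisymmetric deg K \<longleftrightarrow> (\<forall>p. p \<noteq> 0 \<longrightarrow> K (dil deg (-1) p) = - K p)"

fun iter_partial :: "'n::finite list \<Rightarrow> (real^'n \<Rightarrow> real) \<Rightarrow> real^'n \<Rightarrow> real" where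
  "iter_partial [] f = f"
| "iter_partial (i # is) f = (\<lambda>x. deriv (\<lambda>t. iter_partial is f (x + t *\<^sub>R axis i 1)) 0)"

definition smooth_fun :: "(real^'n::finite \<Rightarrow> real) \<Rightarrow> bool" where
  "smooth_fun f \<longleftrightarrow> (\<forall>is x i. continuous_on UNIV (iter_partial is f) \<and>
       (\<lambda>t. iter_partial is f (x + t *\<^sub>R axis i 1)) differentiable (at 0))"

definition radial :: "(real^'n::finite \<Rightarrow> real) \<Rightarrow> (real^'n \<Rightarrow> real) \<Rightarrow> bool" where
  "radial nrm \<psi> \<longleftrightarrow> (\<forall>p q. nrm p = nrm q \<longrightarrow> \<psi> p = \<psi> q)"

definition proj1 :: "('n::finite \<Rightarrow> nat) \<Rightarrow> real^'n \<Rightarrow> real^'n" where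
  "proj1 deg p = (\<chi> i. if deg i = 1 then p $ i else 0)"

definition vertical_hyperplane :: "('n::finite \<Rightarrow> nat) \<Rightarrow> (real^'n) set \<Rightarrow> bool" where
  "vertical_hyperplane deg W \<longleftrightarrow> (\<exists>X. subspace X \<and> X \<subseteq> layer deg 1 \<and>
       dim X + 1 = dim (layer deg 1) \<and> W = {p. proj1 deg p \<in> X})"

text \<open>(N-1)-dimensional Lebesgue measure on a hyperplane W (through 0) of real^'n, as a measure on
real^'n concentrated on W: the measure of A \<subseteq> W is the N-dimensional volume of the prism
A + [0,1] a, a a unit normal of W.\<close>

definition hyperplane_measure :: "(real^'n::finite) set \<Rightarrow> (real^'n) measure" where
  "hyperplane_measure W =
     (let a = (SOME a. norm a = 1 \<and> (\<forall>x. x \<in> W \<longleftrightarrow> a \<bullet> x = 0)) in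
      distr (restrict_space lborel {x. 0 \<le> a \<bullet> x \<and> a \<bullet> x \<le> 1}) lborel (\<lambda>x. x - (a \<bullet> x) *\<^sub>R a))"

definition annular_bounded ::
  "('n::finite \<Rightarrow> nat) \<Rightarrow> (real^'n \<Rightarrow> real) \<Rightarrow> (real^'n \<Rightarrow> real^'d::finite) \<Rightarrow> bool" where
  "annular_bounded deg nrm K \<longleftrightarrow>
     (\<forall>\<psi>. smooth_fun \<psi> \<and> radial nrm \<psi> \<and>
        (\<forall>p. indicator (nball nrm (1/2)) p \<le> \<psi> p \<and> \<psi> p \<le> indicator (nball nrm 2) p) \<longrightarrow>
      (\<exists>A\<ge>1. \<forall>r R W. 0 < r \<and> r < R \<and> vertical_hyperplane deg W \<longrightarrow>
         (\<forall>k. \<bar>\<integral>p. (\<psi> (dil deg R p) - \<psi> (dil deg r p)) * K p $ k \<partial>hyperplane_measure W\<bar> \<le> A)))"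

end

theory Submission
  imports Defs
begin

text \<open>A vertical hyperplane is \<open>W = a\<^sup>\<bottom>\<close> with \<open>a\<close> in the first layer, and both
\<open>\<delta>\<^sub>-\<^sub>1\<close> and the group inversion \<open>p \<mapsto> -p\<close> (exponential coordinates) are diagonal sign
changes that are \<open>-1\<close> on the first layer. Such a map \<open>T\<close> reverses \<open>a\<close>, so it maps \<open>W\<close> onto itself
preserving its Lebesgue measure, and it commutes with the dilations. Under either hypothesis
\<open>\<parallel>\<cdot>\<parallel>\<close> is \<open>T\<close>-invariant and \<open>K\<close> is \<open>T\<close>-odd, hence so is the integrand \<open>(\<psi>\<^sup>R - \<psi>\<^sup>r) K\<close>:
all the integrals in the annular boundedness condition vanish, and \<open>A = 1\<close> works.\<close>

definition diag_scale :: "('n::finite \<Rightarrow> real) \<Rightarrow> real^'n \<Rightarrow> real^'n" where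
  "diag_scale s x = (\<chi> i. s i * x $ i)"

lemma dil_eq_diag_scale: "dil deg t = diag_scale (\<lambda>i. t ^ deg i)"
  by (simp add: fun_eq_iff dil_def diag_scale_def)

lemma diag_scale_minus_one: "diag_scale (\<lambda>_. -1) x = - x"
  by (simp add: diag_scale_def vec_eq_iff)

lemma diag_scale_commute: "diag_scale s (diag_scale s' x) = diag_scale s' (diag_scale s x)"
  by (simp add: diag_scale_def vec_eq_iff)

lemma diag_scale_zero [simp]: "diag_scale s 0 = 0"
  by (simp add: diag_scale_def vec_eq_iff)

lemma linear_diag_scale: "linear (diag_scale s)"
  by (rule linearI) (simp_all add: diag_scale_def vec_eq_iff algebra_simps)

lemma inner_diag_scale: "a \<bullet> diag_scale s x = diag_scale s a \<bullet> x"
  by (simp add: diag_scale_def inner_vec_def algebra_simps)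

lemma lborel_distr_diag_scale:
  fixes s :: "'n::finite \<Rightarrow> real"
  assumes "\<And>i. \<bar>s i\<bar> = 1"
  shows "distr lborel borel (diag_scale s) = lborel"
proof -
  define c where "c j = diag_scale s j \<bullet> j" for j :: "real^'n"
  have c_axis: "c (axis i 1) = s i" for i
    by (simp add: c_def diag_scale_def inner_axis)
  have c_Basis: "\<bar>c j\<bar> = 1" if "j \<in> Basis" for j
    using that assms by (auto simp: Basis_vec_def c_axis)
  have "diag_scale s x = 0 + (\<Sum>j\<in>Basis. (c j * (x \<bullet> j)) *\<^sub>R j)" for x
  proof (rule euclidean_eqI)
    fix b :: "real^'n" assume "b \<in> Basis"
    then obtain k where "b = axis k 1" by (auto simp: Basis_vec_def)
    have "(\<Sum>j\<in>Basis. (c j * (x \<bullet> j)) *\<^sub>R j) \<bullet> b = c b * (x \<bullet> b)"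
      using \<open>b \<in> Basis\<close> by (simp add: inner_sum_left inner_Basis if_distrib cong: if_cong)
    then show "diag_scale s x \<bullet> b = (0 + (\<Sum>j\<in>Basis. (c j * (x \<bullet> j)) *\<^sub>R j)) \<bullet> b"
      by (simp add: \<open>b = axis k 1\<close> c_axis inner_axis diag_scale_def)
  qed
  then have "distr lborel borel (diag_scale s) =
      distr lborel borel (\<lambda>x. 0 + (\<Sum>j\<in>Basis. (c j * (x \<bullet> j)) *\<^sub>R j))"
    by presburger
  also have "\<dots> = lborel"
    using lborel_affine_euclidean[of c 0] c_Basis by (force simp: density_1)
  finally show ?thesis .
qed

definition slab_projection :: "'a::euclidean_space \<Rightarrow> 'a measure" where
  "slab_projection a = distr (restrict_space lborel {x. 0 \<le> a \<bullet> x \<and> a \<bullet> x \<le> 1}) lborel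
     (\<lambda>x. x - (a \<bullet> x) *\<^sub>R a)"

lemma integral_slab_projection_reflect:
  fixes a :: "'a::euclidean_space" and g :: "'a \<Rightarrow> 'b::{banach, second_countable_topology}"
  assumes a: "norm a = 1" and T: "linear T" "distr lborel borel T = lborel"
    and Ta: "T a = - a" and aT: "\<And>x. a \<bullet> T x = - (a \<bullet> x)"
    and [measurable]: "g \<in> borel_measurable borel"
  shows "(\<integral>x. g (T x) \<partial>slab_projection a) = (\<integral>x. g x \<partial>slab_projection a)"
proof -
  define S where "S = {x::'a. 0 \<le> a \<bullet> x \<and> a \<bullet> x \<le> 1}"
  define P where "P x = x - (a \<bullet> x) *\<^sub>R a" for x
  define \<Phi> where "\<Phi> x = a + T x" for x
  have aa: "a \<bullet> a = 1"
    using a by (simp add: dot_square_norm)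
  \<comment> \<open>\<open>\<Phi>\<close> is a measure preserving bijection of the slab with \<open>T \<circ> P = P \<circ> \<Phi>\<close>\<close>
  have T_P: "T (P x) = P (\<Phi> x)" for x
    by (simp add: P_def \<Phi>_def linear_diff[OF T(1)] linear_scale[OF T(1)] Ta aT aa
        inner_add_right algebra_simps)
  have \<Phi>_S: "\<Phi> x \<in> S \<longleftrightarrow> x \<in> S" for x
    by (auto simp: S_def \<Phi>_def inner_add_right aa aT)
  have [measurable]: "S \<in> sets borel" "P \<in> borel_measurable borel"
    unfolding S_def P_def by measurable
  have [measurable]: "T \<in> borel_measurable borel"
    using T(1) by (intro borel_measurable_continuous_onI linear_continuous_on)
      (simp add: linear_conv_bounded_linear)
  then have [measurable]: "\<Phi> \<in> borel_measurable borel"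
    unfolding \<Phi>_def by measurable
  have [measurable]: "P \<in> borel_measurable (restrict_space lborel S)"
    by (rule measurable_restrict_space1) simp
  have "distr lborel borel \<Phi> = distr (distr lborel borel T) borel ((+) a)"
    by (simp add: distr_distr comp_def \<Phi>_def[abs_def])
  also have "\<dots> = lborel"
    using T(2) by (simp add: lborel_distr_plus)
  finally have lborel_\<Phi>: "distr lborel borel \<Phi> = lborel" .
  have "(\<integral>x. g (T x) \<partial>slab_projection a) = (\<integral>x. g (T (P x)) \<partial>restrict_space lborel S)"
    unfolding slab_projection_def S_def[symmetric] P_def[symmetric] by (rule integral_distr) simp_all
  also have "\<dots> = (\<integral>x. indicator S (\<Phi> x) *\<^sub>R g (P (\<Phi> x)) \<partial>lborel)"
    by (simp add: integral_restrict_space indicator_def \<Phi>_S T_P)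
  also have "\<dots> = (\<integral>y. indicator S y *\<^sub>R g (P y) \<partial>distr lborel borel \<Phi>)"
    by (rule integral_distr[symmetric]) simp_all
  also have "\<dots> = (\<integral>x. g (P x) \<partial>restrict_space lborel S)"
    by (simp add: lborel_\<Phi> integral_restrict_space)
  also have "\<dots> = (\<integral>x. g x \<partial>slab_projection a)"
    unfolding slab_projection_def S_def[symmetric] P_def[symmetric] by (rule integral_distr[symmetric]) simp_all
  finally show ?thesis .
qed

lemma codim1_subspace_eq_orthogonal:
  fixes X L :: "'a::euclidean_space set"
  assumes "subspace X" "subspace L" "X \<subseteq> L" "dim X + 1 = dim L"
  obtains a where "a \<in> L" "norm a = 1" "X = {y \<in> L. a \<bullet> y = 0}"
proof -
  have "span X \<subset> span L"
    using assms by (metis dim_span n_not_Suc_n psubsetI span_mono Suc_eq_plus1)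
  then obtain b where b: "b \<noteq> 0" "b \<in> L" "\<And>y. y \<in> X \<Longrightarrow> b \<bullet> y = 0"
    using assms(1,2) by (metis orthogonal_def orthogonal_to_subspace_exists_gen span_eq_iff)
  define a where "a = b /\<^sub>R norm b"
  define H where "H = {y \<in> L. a \<bullet> y = 0}"
  have a: "a \<in> L" "norm a = 1"
    using b(1,2) assms(2) by (simp_all add: a_def subspace_scale)
  have "X \<subseteq> H"
    using assms(3) b(3) by (auto simp: H_def a_def)
  moreover have "subspace H"
    using assms(2) by (auto simp: H_def subspace_def inner_add_right)
  moreover have "dim H < dim L"
  proof (rule dim_psubset)
    have "a \<notin> H"
      using a(2) by (simp add: H_def dot_square_norm)
    with a(1) have "H \<subset> L"
      unfolding H_def by blast
    then show "span H \<subset> span L"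
      using \<open>subspace H\<close> assms(2) by (simp add: span_eq_iff[THEN iffD2])
  qed
  ultimately have "X = H"
    using assms by (intro subspace_dim_equal) auto
  with a that show ?thesis
    by (simp add: H_def)
qed

lemma subspace_layer: "subspace (layer deg j)"
  unfolding subspace_def layer_def by auto

lemma proj1_in_layer1: "proj1 deg x \<in> layer deg 1"
  by (simp add: proj1_def layer_def)

lemma inner_proj1:
  assumes "a \<in> layer deg 1"
  shows "a \<bullet> proj1 deg x = a \<bullet> x"
  unfolding inner_vec_def proj1_def using assms by (intro sum.cong) (auto simp: layer_def)

lemma vertical_hyperplane_eq_orthogonal:
  assumes "vertical_hyperplane deg W"
  obtains a where "a \<in> layer deg 1" "norm a = 1" "W = {x. a \<bullet> x = 0}"
proof -
  obtain X where X: "subspace X" "X \<subseteq> layer deg 1" "dim X + 1 = dim (layer deg 1)"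
    and W: "W = {x. proj1 deg x \<in> X}"
    using assms unfolding vertical_hyperplane_def by blast
  obtain a where a: "a \<in> layer deg 1" "norm a = 1" and "X = {y \<in> layer deg 1. a \<bullet> y = 0}"
    using codim1_subspace_eq_orthogonal[OF X(1) subspace_layer X(2,3)] .
  then have "W = {x. a \<bullet> x = 0}"
    using a(1) proj1_in_layer1[of deg] by (auto simp: W inner_proj1)
  then show ?thesis
    by (rule that[OF a])
qed

lemma vertical_hyperplane_normal_in_layer1:
  assumes "vertical_hyperplane deg W" "\<And>x. x \<in> W \<longleftrightarrow> a \<bullet> x = 0"
  shows "a \<in> layer deg 1"
  unfolding layer_def
proof (intro CollectI allI impI)
  fix i assume "deg i \<noteq> 1"
  obtain b where b: "b \<in> layer deg 1" "W = {x. b \<bullet> x = 0}"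
    using vertical_hyperplane_eq_orthogonal[OF assms(1)] by blast
  have "b \<bullet> axis i 1 = 0"
    using b(1) \<open>deg i \<noteq> 1\<close> by (simp add: inner_axis layer_def)
  then have "axis i 1 \<in> W"
    by (simp add: b(2))
  then show "a $ i = 0"
    using assms(2) by (simp add: inner_axis)
qed

lemma hyperplane_measure_vertical:
  assumes "vertical_hyperplane deg W"
  obtains a where "a \<in> layer deg 1" "norm a = 1" "hyperplane_measure W = slab_projection a"
proof -
  define a where "a = (SOME a. norm a = 1 \<and> (\<forall>x. x \<in> W \<longleftrightarrow> a \<bullet> x = 0))"
  have "\<exists>a. norm a = 1 \<and> (\<forall>x. x \<in> W \<longleftrightarrow> a \<bullet> x = 0)"
    using vertical_hyperplane_eq_orthogonal[OF assms] by blast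
  then have "norm a = 1 \<and> (\<forall>x. x \<in> W \<longleftrightarrow> a \<bullet> x = 0)"
    unfolding a_def by (rule someI_ex)
  then have a: "norm a = 1" "\<And>x. x \<in> W \<longleftrightarrow> a \<bullet> x = 0"
    by blast+
  show ?thesis
  proof (rule that)
    show "a \<in> layer deg 1"
      using vertical_hyperplane_normal_in_layer1[OF assms a(2)] .
    show "hyperplane_measure W = slab_projection a"
      unfolding hyperplane_measure_def slab_projection_def a_def Let_def ..
  qed (rule a(1))
qed

lemma carnot_group_ginv_eq_uminus:
  assumes "carnot_group deg br gmul"
  shows "ginv gmul p = - p"
proof -
  have unit: "\<And>x. gmul 0 x = x \<and> gmul x 0 = x"
    and assoc: "\<And>x y z. gmul (gmul x y) z = gmul x (gmul y z)"
    and line: "\<And>x s t. gmul (s *\<^sub>R x) (t *\<^sub>R x) = (s + t) *\<^sub>R x"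
    using assms unfolding carnot_group_def by blast+
  have right: "gmul p (- p) = 0" and left: "gmul (- p) p = 0"
    using line[of 1 p "-1"] line[of "-1" p 1] by simp_all
  show ?thesis
    unfolding ginv_def
  proof (rule the_equality)
    fix q assume q: "gmul p q = 0 \<and> gmul q p = 0"
    have "q = gmul (gmul (- p) p) q"
      using left unit by simp
    also have "\<dots> = - p"
      using q unit by (simp add: assoc)
    finally show "q = - p" .
  qed (use left right in simp)
qed

lemma smooth_fun_continuous: "smooth_fun f \<Longrightarrow> continuous_on UNIV f"
  unfolding smooth_fun_def by (metis iter_partial.simps(1))

lemma annular_bounded_if_odd_under_diag_scale:
  fixes s :: "'n::finite \<Rightarrow> real" and K :: "real^'n \<Rightarrow> real^'d::finite"
  assumes s: "\<And>i. \<bar>s i\<bar> = 1" "\<And>i. deg i = 1 \<Longrightarrow> s i = -1"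
    and nrm_s: "\<And>p. nrm (diag_scale s p) = nrm p"
    and K_odd: "\<And>p. p \<noteq> 0 \<Longrightarrow> K (diag_scale s p) = - K p"
    and K_cont: "continuous_on (UNIV - {0}) K"
  shows "annular_bounded deg nrm K"
  unfolding annular_bounded_def
proof (intro allI impI exI[of _ 1] conjI order.refl)
  fix \<psi> :: "real^'n \<Rightarrow> real" and r R :: real and W :: "(real^'n) set" and k :: 'd
  assume \<psi>: "smooth_fun \<psi> \<and> radial nrm \<psi> \<and>
      (\<forall>p. indicator (nball nrm (1/2)) p \<le> \<psi> p \<and> \<psi> p \<le> indicator (nball nrm 2) p)"
    and "0 < r \<and> r < R \<and> vertical_hyperplane deg W"
  then obtain a where a: "a \<in> layer deg 1" "norm a = 1" "hyperplane_measure W = slab_projection a"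
    using hyperplane_measure_vertical by blast
  define g where "g p = (\<psi> (dil deg R p) - \<psi> (dil deg r p)) * K p $ k" for p
  have [measurable]: "\<psi> \<in> borel_measurable borel"
    using \<psi> smooth_fun_continuous borel_measurable_continuous_onI by blast
  have [measurable]: "K \<in> borel_measurable borel"
    using K_cont by (intro borel_measurable_continuous_countable_exceptions[of "{0}"])
      (auto simp: Compl_eq_Diff_UNIV)
  have [measurable]: "(\<lambda>x. x $ k) \<in> borel_measurable (borel :: (real^'d) measure)"
    by (intro borel_measurable_continuous_onI continuous_intros)
  have [measurable]: "dil deg t \<in> borel_measurable borel" for t
    unfolding dil_def by (intro borel_measurable_continuous_onI continuous_intros)
  have "g \<in> borel_measurable borel"
    unfolding g_def[abs_def] by measurable
  have \<psi>_dil: "\<psi> (dil deg t (diag_scale s p)) = \<psi> (dil deg t p)" for t p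
    using \<psi> nrm_s unfolding radial_def by (metis dil_eq_diag_scale diag_scale_commute)
  have g_odd: "g (diag_scale s p) = - g p" for p
  proof (cases "p = 0")
    case True
    then show ?thesis
      by (simp add: g_def dil_eq_diag_scale)
  next
    case False
    then show ?thesis
      by (simp add: g_def \<psi>_dil K_odd)
  qed
  have "s i * a $ i = - a $ i" for i
    using a(1) s(2)[of i] by (cases "deg i = 1") (auto simp: layer_def)
  then have s_a: "diag_scale s a = - a"
    by (simp add: vec_eq_iff diag_scale_def)
  have "(\<integral>p. g (diag_scale s p) \<partial>slab_projection a) = (\<integral>p. g p \<partial>slab_projection a)"
    by (rule integral_slab_projection_reflect[OF a(2) linear_diag_scale
          lborel_distr_diag_scale[OF s(1)] s_a _ \<open>g \<in> borel_measurable borel\<close>])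
      (simp add: inner_diag_scale s_a)
  then have "(\<integral>p. g p \<partial>hyperplane_measure W) = 0"
    by (simp add: g_odd a(3))
  then show "\<bar>\<integral>p. (\<psi> (dil deg R p) - \<psi> (dil deg r p)) * K p $ k \<partial>hyperplane_measure W\<bar> \<le> 1"
    by (simp add: g_def)
qed

theorem lemma2p9:
  fixes deg :: "'n::finite \<Rightarrow> nat"
    and br gmul :: "real^'n \<Rightarrow> real^'n \<Rightarrow> real^'n"
    and nrm :: "real^'n \<Rightarrow> real"
    and K :: "real^'n \<Rightarrow> real^'d::finite"
  assumes "carnot_group deg br gmul"
    and "strongly_homogeneous_norm deg nrm"
    and "continuous_on (UNIV - {0}) K"
  shows "(dilation_antisymmetric deg K \<longrightarrow> annular_bounded deg nrm K) \<and>
         (symmetric_norm gmul nrm \<and> antisymmetric_kernel gmul K \<longrightarrow> annular_bounded deg nrm K)"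
proof (intro conjI impI)
  assume "dilation_antisymmetric deg K"
  moreover have "nrm (dil deg (-1) p) = nrm p" for p
    using assms(2) by (simp add: strongly_homogeneous_norm_def)
  ultimately show "annular_bounded deg nrm K"
    using assms(3)
    by (intro annular_bounded_if_odd_under_diag_scale[where s = "\<lambda>i. (-1) ^ deg i"])
      (auto simp: dilation_antisymmetric_def dil_eq_diag_scale)
next
  assume "symmetric_norm gmul nrm \<and> antisymmetric_kernel gmul K"
  then show "annular_bounded deg nrm K"
    using assms(3)
    by (intro annular_bounded_if_odd_under_diag_scale[where s = "\<lambda>_. -1"])
      (auto simp: symmetric_norm_def antisymmetric_kernel_def diag_scale_minus_one
        carnot_group_ginv_eq_uminus[OF assms(1)])
qed

end
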